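(* Let $\pi\in\mathfrak{S}_m$ be in standard form. Then, as $k\to\infty$, $\left(r^\pi_{1+k(m-1),k}\right)^{1/k}=O\!\left(k^{m-\pi_m+\pi_1-1}\right)$.
   Context: The standardization $\operatorname{st}(w)$ of a word of distinct integers replaces its smallest entry by 1, the next smallest by 2, etc. For $\pi\in\mathfrak{S}_m$ and $\sigma\in\mathfrak{S}_n$, $\operatorname{Em}(\pi,\sigma)=\{i\in[n-m+1]:\operatorname{st}(\sigma_i\cdots\sigma_{i+m-1})=\pi\}$. The overlap set is $\mathcal{O}_\pi=\{i\in[m-1]:\operatorname{st}(\pi_{i+1}\cdots\pi_m)=\operatorname{st}(\pi_1\cdots\pi_{m-i})\}$. A $\pi$-cluster is a pair $(\sigma,S)$ with $\sigma\in\mathfrak{S}_n$ and $S=\{i_1<\dots<i_k\}\subseteq\operatorname{Em}(\pi,\sigma)$ such that $i_1=1$, $i_k=n-m+1$, and $i_{j+1}-i_j\in\mathcal{O}_\pi$ for all $j\in[k-1]$. The cluster number $r^\pi_{n,k}$ is the number of $\pi$-clusters $(\sigma,S)$ with $\sigma\in\mathfrak{S}_n$ and $|S|=k$. $\pi\in\mathfrak{S}_m$ is in standard form if $\pi_1<\pi_m$ and $\pi_1+\pi_m\le m+1$. *)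

theory Defs
  imports Complex_Main "HOL-Library.Landau_Symbols"
begin

text \<open>Permutations of [n] in one-line notation: lists of length n containing 1..n once.
  Positions are 1-indexed in the paper; list index i-1 corresponds to position i.\<close>

definition is_perm :: "nat list \<Rightarrow> nat \<Rightarrow> bool" where
  "is_perm w n \<longleftrightarrow> length w = n \<and> distinct w \<and> set w = {1..n}"

definition st :: "nat list \<Rightarrow> nat list" where
  "st w = map (\<lambda>x. card {y \<in> set w. y \<le> x}) w"

definition Em :: "nat list \<Rightarrow> nat list \<Rightarrow> nat set" where
  "Em p \<sigma> = {i. 1 \<le> i \<and> i + length p \<le> length \<sigma> + 1 \<and>
                 st (take (length p) (drop (i - 1) \<sigma>)) = p}"

definition overlaps :: "nat list \<Rightarrow> nat set" where
  "overlaps p = {i. 1 \<le> i \<and> i \<le> length p - 1 \<and>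
                    st (drop i p) = st (take (length p - i) p)}"

definition is_cluster :: "nat list \<Rightarrow> nat list \<Rightarrow> nat set \<Rightarrow> bool" where
  "is_cluster p \<sigma> S \<longleftrightarrow> finite S \<and> S \<subseteq> Em p \<sigma> \<and>
     (let l = sorted_list_of_set S in
        l \<noteq> [] \<and> hd l = 1 \<and> last l = length \<sigma> - length p + 1 \<and>
        (\<forall>j. j + 1 < length l \<longrightarrow> l ! (j + 1) - l ! j \<in> overlaps p))"

definition cluster_number :: "nat list \<Rightarrow> nat \<Rightarrow> nat \<Rightarrow> nat" where
  "cluster_number p n k =
     card {(\<sigma>, S). is_perm \<sigma> n \<and> is_cluster p \<sigma> S \<and> card S = k}"

definition standard_form :: "nat list \<Rightarrow> bool" where
  "standard_form p \<longleftrightarrow> p ! 0 < p ! (length p - 1) \<and>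
                        p ! 0 + p ! (length p - 1) \<le> length p + 1"

end

theory Submission
  imports Defs "HOL-Library.FuncSet"
begin

text \<open>A \<pi>-cluster of length \<open>1 + k(m - 1)\<close> with \<open>k\<close> occurrences is a chain of \<open>k\<close> windows,
  each order-isomorphic to \<pi>, in which consecutive windows share exactly one entry. Inside a
  window, the entries whose pattern value lies between \<open>\<pi>\<^sub>1\<close> and \<open>\<pi>\<^sub>m\<close> lie between the two
  shared endpoints, so all such entries of \<sigma> are ordered in a way dictated by \<pi> alone. Hence \<sigma> is
  determined by its values at the remaining at most \<open>k(m - \<pi>\<^sub>m + \<pi>\<^sub>1 - 1)\<close> positions, giving
  \<open>r \<le> n\<^bsup>k(m - \<pi>\<^sub>m + \<pi>\<^sub>1 - 1)\<^esup>\<close> with \<open>n = 1 + k(m - 1) \<le> mk\<close>.\<close>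

lemma st_less_iff:
  assumes "st w = p" "i < length w" "j < length w"
  shows "w!i < w!j \<longleftrightarrow> p!i < p!j"
proof -
  have rank: "p!r = card {y \<in> set w. y \<le> w!r}" if "r < length w" for r
    using assms(1) that unfolding st_def by auto
  have "w!i < w!j \<Longrightarrow> {y \<in> set w. y \<le> w!i} \<subset> {y \<in> set w. y \<le> w!j}"
    using nth_mem[OF assms(3)] by (intro psubsetI subsetI) (auto simp: set_eq_iff intro!: exI[of _ "w!j"])
  then have "w!i < w!j \<Longrightarrow> card {y \<in> set w. y \<le> w!i} < card {y \<in> set w. y \<le> w!j}"
    by (intro psubset_card_mono) auto
  moreover have "\<not> w!i < w!j \<Longrightarrow> card {y \<in> set w. y \<le> w!j} \<le> card {y \<in> set w. y \<le> w!i}"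
    by (intro card_mono) auto
  ultimately show ?thesis using rank assms(2,3) by force
qed

lemma eq_on_if_same_image_same_order:
  fixes f g :: "'a \<Rightarrow> 'b::linorder"
  assumes "finite A" "inj_on f A" "inj_on g A" "f ` A = g ` A"
    and order: "\<And>x y. x \<in> A \<Longrightarrow> y \<in> A \<Longrightarrow> f x < f y \<longleftrightarrow> g x < g y"
    and x: "x \<in> A"
  shows "f x = g x"
proof -
  define below where "below u = card {v \<in> f ` A. v < u}" for u
  have "{v \<in> f ` A. v < f x} = f ` {y \<in> A. f y < f x}" by auto
  moreover have "{v \<in> f ` A. v < g x} = g ` {y \<in> A. f y < f x}"
    unfolding assms(4) using order[OF _ x] by auto
  ultimately have "below (f x) = below (g x)"
    using assms(2,3) by (simp add: below_def card_image inj_on_subset)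
  \<comment> \<open>an element of a finite linear order is determined by the number of elements below it\<close>
  moreover have "below u < below u'" if "u < u'" "u \<in> f ` A" for u u'
    unfolding below_def using that assms(1) by (intro psubset_card_mono) auto
  moreover have "f x \<in> f ` A" "g x \<in> f ` A" using x assms(4) by auto
  ultimately show ?thesis by (metis linorder_neqE less_irrefl)
qed

lemma card_perm_values_outside:
  assumes "is_perm p m" "1 \<le> a" "a \<le> b" "b \<le> m"
  shows "card {t. t < m \<and> p!t \<notin> {a..b}} = m - (b + 1 - a)"
proof -
  have "bij_betw (nth p) {..<m} {1..m}"
    using assms(1) by (intro bij_betw_nth) (auto simp: is_perm_def)
  then have "bij_betw (nth p) {t \<in> {..<m}. p!t \<notin> {a..b}} {v \<in> {1..m}. v \<notin> {a..b}}"
    by (rule bij_betw_Collect) simp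
  then have "card {t. t < m \<and> p!t \<notin> {a..b}} = card ({1..m} - {a..b})"
    by (simp add: bij_betw_same_card set_diff_eq)
  also have "\<dots> = m - (b + 1 - a)"
    using assms(2-4) by (subst card_Diff_subset) auto
  finally show ?thesis .
qed

lemma cluster_positions_of_minimal_length:
  assumes cl: "is_cluster p \<sigma> S" and "card S = k" and "length \<sigma> = 1 + k*(m-1)"
    and "length p = m" and "1 \<le> m"
  shows "S = (\<lambda>j. 1 + j*(m-1)) ` {..<k}"
proof -
  define l where "l = sorted_list_of_set S"
  from cl have fin: "finite S" and ne: "l \<noteq> []" and hd: "hd l = 1"
    and last: "last l = length \<sigma> - length p + 1"
    and gap: "\<And>j. j+1 < length l \<Longrightarrow> l!(j+1) - l!j \<in> overlaps p"
    unfolding is_cluster_def l_def Let_def by auto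
  have len: "length l = k" using fin assms(2) by (simp add: l_def)
  then have "k \<ge> 1" using ne by (cases k) auto
  have first: "l!0 = 1" using hd ne by (simp add: hd_conv_nth)
  have final: "l!(k-1) = 1 + (k-1)*(m-1)"
    using last ne len assms(3-5) \<open>k \<ge> 1\<close> by (simp add: last_conv_nth diff_mult_distrib)
  have next_le: "l!(Suc j) \<le> l!j + (m-1)" if "Suc j < k" for j
    using gap[of j] that len assms(4) by (auto simp: overlaps_def)
  have spread: "l!j \<le> l!i + (j-i)*(m-1)" if "i \<le> j" "j < k" for i j
    using that
  proof (induction j rule: dec_induct)
    case (step j)
    then show ?case using next_le[of j] by (simp add: Suc_diff_le)
  qed simp
  have "l!j = 1 + j*(m-1)" if "j < k" for j
  proof -
    have "l!j \<le> 1 + j*(m-1)" using spread[of 0 j] that first by simp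
    moreover have "l!(k-1) \<le> l!j + (k-1-j)*(m-1)" using spread[of j "k-1"] that by simp
    moreover have "(k-1)*(m-1) = j*(m-1) + (k-1-j)*(m-1)"
      using that by (simp flip: add_mult_distrib)
    ultimately show ?thesis using final by linarith
  qed
  moreover have "set l = S" using fin by (simp add: l_def)
  ultimately show ?thesis unfolding set_conv_nth len by force
qed

locale rising_pattern =
  fixes p :: "nat list" and m :: nat
  assumes perm: "is_perm p m" and first_less_last: "p!0 < p!(m-1)"
begin

lemma length_pattern: "length p = m"
  using perm by (simp add: is_perm_def)

lemma two_le_length: "2 \<le> m"
proof (rule ccontr)
  assume "\<not> 2 \<le> m"
  then have "m - 1 = 0" by simp
  then show False using first_less_last by simp
qed

lemma nth_pattern_inj: "t < m \<Longrightarrow> t' < m \<Longrightarrow> p!t = p!t' \<Longrightarrow> t = t'"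
  using perm by (simp add: is_perm_def nth_eq_iff_index_eq)

definition linked_cluster :: "nat \<Rightarrow> nat list \<Rightarrow> bool" where
  "linked_cluster k \<sigma> \<longleftrightarrow> is_perm \<sigma> (1 + k*(m-1)) \<and>
     (\<forall>j<k. st (take m (drop (j*(m-1)) \<sigma>)) = p)"

lemma cluster_imp_linked_cluster:
  assumes "is_perm \<sigma> (1 + k*(m-1))" "is_cluster p \<sigma> S" "card S = k"
  shows "linked_cluster k \<sigma> \<and> S = (\<lambda>j. 1 + j*(m-1)) ` {..<k}"
proof -
  have S: "S = (\<lambda>j. 1 + j*(m-1)) ` {..<k}"
    using assms two_le_length length_pattern
    by (intro cluster_positions_of_minimal_length) (auto simp: is_perm_def)
  have "1 + j*(m-1) \<in> Em p \<sigma>" if "j < k" for j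
    using S that assms(2) by (auto simp: is_cluster_def)
  then show ?thesis
    using S assms(1) length_pattern by (simp add: linked_cluster_def Em_def)
qed

text \<open>Position \<open>q = J(m - 1) + t\<close>, \<open>t < m - 1\<close>, is offset \<open>t\<close> of window \<open>J\<close>. It is on the chain if its
  pattern value lies between those of the window's shared endpoints; \<open>level\<close> orders the chain.\<close>

definition on_chain :: "nat \<Rightarrow> bool" where
  "on_chain q \<longleftrightarrow> p!(q mod (m-1)) \<in> {p!0..p!(m-1)}"

definition level :: "nat \<Rightarrow> nat" where
  "level q = (q div (m-1)) * (p!(m-1) - p!0) + (p!(q mod (m-1)) - p!0)"

context
  fixes k :: nat and \<sigma> :: "nat list"
  assumes linked: "linked_cluster k \<sigma>"
begin

lemma window_less_iff:
  assumes "j < k" "t < m" "t' < m"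
  shows "\<sigma>!(j*(m-1) + t) < \<sigma>!(j*(m-1) + t') \<longleftrightarrow> p!t < p!t'"
proof -
  define w where "w = take m (drop (j*(m-1)) \<sigma>)"
  have "j*(m-1) + m \<le> 1 + k*(m-1)"
    using mult_le_mono1[of "Suc j" k "m-1"] assms(1) two_le_length by simp
  then have "length w = m" and "\<And>s. s < m \<Longrightarrow> w!s = \<sigma>!(j*(m-1) + s)"
    using linked by (auto simp: w_def linked_cluster_def is_perm_def)
  moreover have "st w = p" using linked assms(1) by (simp add: w_def linked_cluster_def)
  ultimately show ?thesis using st_less_iff[of w p t t'] assms(2,3) by simp
qed

lemma anchor_less: "j < k \<Longrightarrow> \<sigma>!(j*(m-1)) < \<sigma>!(Suc j*(m-1))"
  using window_less_iff[of j 0 "m-1"] first_less_last by (simp add: add.commute)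

lemma anchor_mono: "j \<le> j' \<Longrightarrow> j' \<le> k \<Longrightarrow> \<sigma>!(j*(m-1)) \<le> \<sigma>!(j'*(m-1))"
  using lift_Suc_mono_le_ivl[of "{..<k}" "\<lambda>j. \<sigma>!(j*(m-1))" j j',
      OF less_imp_le[OF anchor_less]] by (simp add: subset_iff)

lemma chain_less:
  assumes q: "q < 1 + k*(m-1)" "on_chain q" and q': "q' < 1 + k*(m-1)" "on_chain q'"
    and "q \<noteq> q'" and "level q \<le> level q'"
  shows "\<sigma>!q < \<sigma>!q'"
proof -
  define d a b where "d = m - 1" and "a = p!0" and "b = p!d"
  define J t J' t' where "J = q div d" and "t = q mod d" and "J' = q' div d" and "t' = q' mod d"
  have d: "0 < d" "d < m" using two_le_length by (auto simp: d_def)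
  have decomp: "q = J*d + t" "q' = J'*d + t'" by (simp_all add: J_def t_def J'_def t'_def)
  have small: "t < d" "t' < d" using d by (simp_all add: t_def t'_def)
  have "a < b" using first_less_last by (simp add: a_def b_def d_def)
  have range: "p!t \<in> {a..b}" "p!t' \<in> {a..b}"
    using q q' by (simp_all add: on_chain_def a_def b_def t_def t'_def d_def)
  have level: "J*(b-a) + (p!t - a) \<le> J'*(b-a) + (p!t' - a)"
    using assms(6) by (simp add: level_def J_def t_def J'_def t'_def a_def b_def d_def)
  have "q \<le> k*d" "q' \<le> k*d" using q(1) q'(1) by (simp_all add: d_def)
  then have J: "J \<le> k" "J' \<le> k"
    using div_le_mono[of q "k*d" d] div_le_mono[of q' "k*d" d] d by (simp_all add: J_def J'_def)
  have last_window: "J = k \<Longrightarrow> t = 0" "J' = k \<Longrightarrow> t' = 0"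
    using decomp \<open>q \<le> k*d\<close> \<open>q' \<le> k*d\<close> by auto
  have "p!t < b" using range small d nth_pattern_inj[of t d] by (fastforce simp: b_def)
  have "t' \<noteq> 0 \<Longrightarrow> a < p!t'" using range small d nth_pattern_inj[of 0 t'] by (fastforce simp: a_def)
  consider "J < J'" | "J = J'" | "J' < J" by arith
  then show ?thesis
  proof cases
    case 1
    have "\<sigma>!q < \<sigma>!(Suc J*d)"
      using window_less_iff[of J t d] 1 J small d \<open>p!t < b\<close> decomp
      by (simp add: d_def b_def add.commute)
    also have "\<dots> \<le> \<sigma>!(J'*d)" using anchor_mono[of "Suc J" J'] 1 J by (simp add: d_def)
    also have "\<dots> \<le> \<sigma>!q'"
    proof (cases "t' = 0")
      case False
      then have "J' < k" using J last_window by fastforce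
      then show ?thesis
        using window_less_iff[of J' 0 t'] False \<open>t' \<noteq> 0 \<Longrightarrow> a < p!t'\<close> small d decomp
        by (simp add: d_def a_def)
    qed (simp add: decomp)
    finally show ?thesis .
  next
    case 2
    then have "t \<noteq> t'" using \<open>q \<noteq> q'\<close> decomp by auto
    then have "J < k" using 2 J last_window by (cases "J = k") auto
    have "p!t \<noteq> p!t'" using \<open>t \<noteq> t'\<close> nth_pattern_inj small d by fastforce
    moreover have "p!t \<le> p!t'" using level range 2 by auto
    ultimately show ?thesis using window_less_iff[of J t t'] \<open>J < k\<close> small d decomp 2
      by (simp add: d_def)
  next
    case 3
    then have "J'*(b-a) + (b-a) \<le> J*(b-a)" using mult_le_mono1[of "Suc J'" J "b-a"] by simp
    then have "p!t' = b" using level range by auto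
    then show ?thesis using nth_pattern_inj[of t' d] small d by (simp add: b_def)
  qed
qed

lemma chain_less_iff:
  assumes "q < 1 + k*(m-1)" "on_chain q" "q' < 1 + k*(m-1)" "on_chain q'"
  shows "\<sigma>!q < \<sigma>!q' \<longleftrightarrow> q \<noteq> q' \<and> level q \<le> level q'"
  using chain_less[OF assms] chain_less[OF assms(3,4,1,2)] by fastforce

end

lemma linked_cluster_determined_off_chain:
  assumes \<sigma>: "linked_cluster k \<sigma>" and \<sigma>': "linked_cluster k \<sigma>'"
    and off_chain: "\<And>q. q < 1 + k*(m-1) \<Longrightarrow> \<not> on_chain q \<Longrightarrow> \<sigma>!q = \<sigma>'!q"
  shows "\<sigma> = \<sigma>'"
proof -
  define n where "n = 1 + k*(m-1)"
  define C N where "C = {q. q < n \<and> on_chain q}" and "N = {q. q < n \<and> \<not> on_chain q}"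
  have perms: "is_perm \<sigma> n" "is_perm \<sigma>' n" using \<sigma> \<sigma>' by (simp_all add: linked_cluster_def n_def)
  then have inj: "inj_on (nth \<sigma>) {..<n}" "inj_on (nth \<sigma>') {..<n}"
    by (auto simp: is_perm_def intro!: inj_on_nth)
  have "nth xs ` {..<length xs} = set xs" for xs :: "nat list"
    by (auto simp: set_conv_nth)
  then have "nth \<sigma> ` {..<n} = nth \<sigma>' ` {..<n}"
    using perms by (metis is_perm_def)
  moreover have "nth \<sigma> ` N = nth \<sigma>' ` N" using off_chain by (auto simp: N_def n_def)
  moreover have "C = {..<n} - N" "N \<subseteq> {..<n}" by (auto simp: C_def N_def)
  ultimately have image: "nth \<sigma> ` C = nth \<sigma>' ` C" using inj by (simp add: inj_on_image_set_diff)
  have "C \<subseteq> {..<n}" by (auto simp: C_def)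
  then have inj_C: "inj_on (nth \<sigma>) C" "inj_on (nth \<sigma>') C" using inj by (auto intro: inj_on_subset)
  have order: "\<sigma>!x < \<sigma>!y \<longleftrightarrow> \<sigma>'!x < \<sigma>'!y" if "x \<in> C" "y \<in> C" for x y
    using that chain_less_iff[OF \<sigma>] chain_less_iff[OF \<sigma>'] by (simp add: C_def n_def)
  have agree_on_chain: "\<sigma>!q = \<sigma>'!q" if "q \<in> C" for q
    using eq_on_if_same_image_same_order[OF _ inj_C image order that] by (simp add: C_def)
  have "length \<sigma> = n" "length \<sigma>' = n" using perms by (simp_all add: is_perm_def)
  then show ?thesis
    using agree_on_chain off_chain by (intro nth_equalityI) (auto simp: C_def n_def)
qed

lemma card_off_chain:
  "card {q. q < 1 + k*(m-1) \<and> \<not> on_chain q} \<le> k * (m - p!(m-1) + p!0 - 1)"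
proof -
  define T where "T = {t. t < m \<and> p!t \<notin> {p!0..p!(m-1)}}"
  have "p!0 \<in> {1..m}" "p!(m-1) \<in> {1..m}"
    using perm two_le_length nth_mem[of 0 p] nth_mem[of "m-1" p] by (auto simp: is_perm_def)
  then have "card T = m - p!(m-1) + p!0 - 1"
    using card_perm_values_outside[OF perm, of "p!0" "p!(m-1)"] first_less_last by (simp add: T_def)
  have "q div (m-1) < k" if "q < 1 + k*(m-1)" "\<not> on_chain q" for q
  proof (rule ccontr)
    assume "\<not> q div (m-1) < k"
    then have "k*(m-1) \<le> q div (m-1) * (m-1)" by simp
    also have "\<dots> \<le> q" by (rule div_times_less_eq_dividend)
    finally have "q = k*(m-1)" using that(1) by simp
    then show False using that(2) first_less_last by (simp add: on_chain_def)
  qed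
  moreover have "q mod (m-1) \<in> T" if "\<not> on_chain q" for q
  proof -
    have "q mod (m-1) < m - 1" using two_le_length by simp
    then show ?thesis using that by (simp add: T_def on_chain_def)
  qed
  ultimately have "(\<lambda>q. (q div (m-1), q mod (m-1))) ` {q. q < 1 + k*(m-1) \<and> \<not> on_chain q}
      \<subseteq> {..<k} \<times> T" by auto
  moreover have "inj_on (\<lambda>q. (q div (m-1), q mod (m-1))) A" for A
    by (rule inj_onI) (metis div_mult_mod_eq prod.inject)
  ultimately have "card {q. q < 1 + k*(m-1) \<and> \<not> on_chain q} \<le> card ({..<k} \<times> T)"
    by (intro card_inj_on_le) (auto simp: T_def)
  also have "\<dots> = k * (m - p!(m-1) + p!0 - 1)"
    using \<open>card T = _\<close> by (simp add: card_cartesian_product)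
  finally show ?thesis .
qed

lemma card_linked_cluster_le:
  "card {\<sigma>. linked_cluster k \<sigma>} \<le> (1 + k*(m-1)) ^ (k * (m - p!(m-1) + p!0 - 1))"
proof -
  define n where "n = 1 + k*(m-1)"
  define N where "N = {q. q < n \<and> \<not> on_chain q}"
  have "inj_on (\<lambda>\<sigma>. restrict (nth \<sigma>) N) {\<sigma>. linked_cluster k \<sigma>}"
  proof (rule inj_onI)
    fix \<sigma> \<sigma>' assume linked: "\<sigma> \<in> {\<sigma>. linked_cluster k \<sigma>}" "\<sigma>' \<in> {\<sigma>. linked_cluster k \<sigma>}"
      and eq: "restrict (nth \<sigma>) N = restrict (nth \<sigma>') N"
    have "\<sigma>!q = \<sigma>'!q" if "q \<in> N" for q
      using fun_cong[OF eq, of q] that by simp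
    then show "\<sigma> = \<sigma>'"
      using linked by (intro linked_cluster_determined_off_chain) (auto simp: N_def n_def)
  qed
  moreover have "(\<lambda>\<sigma>. restrict (nth \<sigma>) N) ` {\<sigma>. linked_cluster k \<sigma>} \<subseteq> N \<rightarrow>\<^sub>E {1..n}"
  proof
    fix f assume "f \<in> (\<lambda>\<sigma>. restrict (nth \<sigma>) N) ` {\<sigma>. linked_cluster k \<sigma>}"
    then obtain \<sigma> where \<sigma>: "linked_cluster k \<sigma>" and f: "f = restrict (nth \<sigma>) N" by blast
    have "\<sigma>!q \<in> {1..n}" if "q \<in> N" for q
      using \<sigma> that nth_mem[of q \<sigma>] by (simp add: linked_cluster_def is_perm_def N_def n_def)
    then show "f \<in> N \<rightarrow>\<^sub>E {1..n}" by (simp add: f)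
  qed
  moreover have "finite N" by (simp add: N_def)
  ultimately have "card {\<sigma>. linked_cluster k \<sigma>} \<le> card (N \<rightarrow>\<^sub>E {1..n})"
    by (intro card_inj_on_le) (auto simp: finite_PiE)
  also have "\<dots> = n ^ card N" using \<open>finite N\<close> by (simp add: card_PiE)
  also have "\<dots> \<le> n ^ (k * (m - p!(m-1) + p!0 - 1))"
    using card_off_chain by (intro power_increasing) (auto simp: N_def n_def)
  finally show ?thesis by (simp add: n_def)
qed

lemma cluster_number_le_card_linked_cluster:
  "cluster_number p (1 + k*(m-1)) k \<le> card {\<sigma>. linked_cluster k \<sigma>}"
proof -
  have "{\<sigma>. linked_cluster k \<sigma>} \<subseteq> {xs. set xs \<subseteq> {1..1 + k*(m-1)} \<and> length xs = 1 + k*(m-1)}"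
    by (auto simp: linked_cluster_def is_perm_def)
  then have "finite {\<sigma>. linked_cluster k \<sigma>}" by (rule finite_subset) (simp add: finite_lists_length_eq)
  moreover have "{(\<sigma>, S). is_perm \<sigma> (1 + k*(m-1)) \<and> is_cluster p \<sigma> S \<and> card S = k}
      \<subseteq> (\<lambda>\<sigma>. (\<sigma>, (\<lambda>j. 1 + j*(m-1)) ` {..<k})) ` {\<sigma>. linked_cluster k \<sigma>}"
    using cluster_imp_linked_cluster by fast
  ultimately show ?thesis
    unfolding cluster_number_def by (meson card_image_le card_mono finite_imageI le_trans)
qed

end

lemma powr_inverse_le_if_le_power:
  fixes x y :: real
  assumes "0 \<le> x" "0 < y" "0 < k" "x \<le> y ^ (k*e)"
  shows "x powr (1 / real k) \<le> y ^ e"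
proof -
  have "x powr (1 / real k) \<le> (y ^ (k*e)) powr (1 / real k)"
    using assms by (intro powr_mono2) auto
  also have "\<dots> = y ^ e"
    using assms(2,3) by (simp add: powr_realpow[symmetric] powr_powr)
  finally show ?thesis .
qed

theorem lemma4p2:
  fixes p :: "nat list" and m :: nat
  assumes "is_perm p m" and "standard_form p"
  shows "(\<lambda>k::nat. real (cluster_number p (1 + k * (m - 1)) k) powr (1 / real k))
           \<in> O(\<lambda>k. real k ^ (m - p ! (m - 1) + p ! 0 - 1))"
proof
  \<comment> \<open>of the standard form only \<open>\<pi>\<^sub>1 < \<pi>\<^sub>m\<close> is needed\<close>
  interpret rising_pattern p m
    using assms by unfold_locales (auto simp: standard_form_def is_perm_def)
  define e where "e = m - p ! (m - 1) + p ! 0 - 1"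
  have "real (cluster_number p (1 + k*(m-1)) k) powr (1 / real k) \<le> real m ^ e * real k ^ e"
    if "k \<ge> 1" for k
  proof -
    have "1 + k*(m-1) \<le> m * k"
      using that two_le_length by (cases m) (auto simp: algebra_simps)
    then have "cluster_number p (1 + k*(m-1)) k \<le> (m * k) ^ (k*e)"
      using cluster_number_le_card_linked_cluster card_linked_cluster_le
      by (metis e_def power_mono zero_le order_trans)
    then have "real (cluster_number p (1 + k*(m-1)) k) \<le> (real m * real k) ^ (k*e)"
      by (metis of_nat_le_iff of_nat_mult of_nat_power)
    then show ?thesis
      using that two_le_length by (subst power_mult_distrib[symmetric]) (intro powr_inverse_le_if_le_power; simp)
  qed
  then show "\<forall>\<^sub>F k in at_top. norm (real (cluster_number p (1 + k * (m - 1)) k) powr (1 / real k))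
      \<le> real m ^ e * norm (real k ^ (m - p ! (m - 1) + p ! 0 - 1))"
    by (auto simp: e_def eventually_at_top_linorder)
qed

end
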